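(* Let $D\subset\mathbb{R}^2$ be an open set and let $\phi:D\to\mathbb{R}$ be a continuously differentiable function. Consider the system of Keyfitz–Kranzer type \[ u_t+(u\,\phi(u,v))_x=0,\qquad v_t+(v\,\phi(u,v))_x=0, \] with flux $F(u,v)=(u\phi(u,v),\,v\phi(u,v))$. Let $\eta:D\to\mathbb{R}$ be a $C^1$ function which is Lipschitz in a neighborhood of the origin, and let $q(u,v)=\psi(u,v)+\eta(u,v)\phi(u,v)$, where $\psi:D\to\mathbb{R}$ is a $C^1$ function satisfying \[ \nabla\psi(u,v)=\big((u,v)\cdot\nabla\eta(u,v)-\eta(u,v)\big)\,\nabla\phi(u,v)\quad\text{on } D. \] Then $(\eta,q)$ is an entropy–entropy flux pair for this system, i.e. $\nabla\eta(u,v)\,DF(u,v)=\nabla q(u,v)$ on $D$, where $DF$ is the Jacobian matrix of $F$. Moreover, if $\eta$ is convex, then $(\eta,q)$ is a convex entropy–entropy flux pair.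
   Context: For a system $U_t+F(U)_x=0$ with $U=(u,v)$, a pair of functions $\eta,q$ is called an entropy–entropy flux pair if $\nabla\eta(U)\,DF(U)=\nabla q(U)$ (gradients written as row vectors); it is called a convex entropy–entropy flux pair if in addition $\eta$ is convex. *)

theory Defs
  imports "HOL-Analysis.Analysis"
begin

text \<open>Points of the plane are pairs (u,v) :: real \<times> real.  The Frechet derivative
  frechet_derivative f (at p) is the linear map h \<mapsto> \<nabla>f(p) h (row vector / Jacobian).\<close>

definition C1_on :: "(real \<times> real) set \<Rightarrow> (real \<times> real \<Rightarrow> 'b::real_normed_vector) \<Rightarrow> bool" where
  "C1_on D f \<longleftrightarrow> (\<forall>p\<in>D. f differentiable (at p)) \<and>
     continuous_on D (\<lambda>p. frechet_derivative f (at p) (1, 0)) \<and>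
     continuous_on D (\<lambda>p. frechet_derivative f (at p) (0, 1))"

text \<open>Entropy--entropy flux pair for U_t + F(U)_x = 0 on D:
  \<nabla>\<eta>(U) DF(U) = \<nabla>q(U), i.e. for every direction h,
  D\<eta>(U)(DF(U) h) = Dq(U) h.\<close>
definition entropy_pair ::
  "(real \<times> real) set \<Rightarrow> (real \<times> real \<Rightarrow> real \<times> real) \<Rightarrow> (real \<times> real \<Rightarrow> real) \<Rightarrow> (real \<times> real \<Rightarrow> real) \<Rightarrow> bool" where
  "entropy_pair D F \<eta> q \<longleftrightarrow>
     (\<forall>p\<in>D. F differentiable (at p) \<and> \<eta> differentiable (at p) \<and> q differentiable (at p) \<and>
       (\<forall>h. frechet_derivative \<eta> (at p) (frechet_derivative F (at p) h) = frechet_derivative q (at p) h))"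

definition convex_entropy_pair ::
  "(real \<times> real) set \<Rightarrow> (real \<times> real \<Rightarrow> real \<times> real) \<Rightarrow> (real \<times> real \<Rightarrow> real) \<Rightarrow> (real \<times> real \<Rightarrow> real) \<Rightarrow> bool" where
  "convex_entropy_pair D F \<eta> q \<longleftrightarrow> entropy_pair D F \<eta> q \<and> convex_on D \<eta>"

end

theory Submission
  imports Defs
begin

text \<open>Write the flux as \<open>F U = \<phi>(U) U\<close>. Then \<open>DF(U) h = (D\<phi>(U) h) U + \<phi>(U) h\<close>, so by
  linearity \<open>D\<eta>(U)(DF(U) h) = D\<phi>(U) h \<cdot> D\<eta>(U) U + \<phi>(U) D\<eta>(U) h\<close>, while the product rule
  gives \<open>Dq(U) h = D\<psi>(U) h + \<eta>(U) D\<phi>(U) h + \<phi>(U) D\<eta>(U) h\<close>. The hypothesis on \<open>\<nabla>\<psi>\<close> is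
  exactly what makes the two agree.\<close>

lemma has_derivative_scaleR_self:
  fixes \<phi> :: "'a::real_normed_vector \<Rightarrow> real"
  assumes "(\<phi> has_derivative L) (at p)"
  shows "((\<lambda>x. \<phi> x *\<^sub>R x) has_derivative (\<lambda>h. L h *\<^sub>R p + \<phi> p *\<^sub>R h)) (at p)"
  using assms by (auto intro!: derivative_eq_intros)

lemma keyfitz_kranzer_entropy_identity:
  fixes \<phi> \<eta> :: "'a::real_normed_vector \<Rightarrow> real"
  assumes "linear E"
    and "\<And>h. S h = (E p - \<eta> p) * L h"
  shows "E (L h *\<^sub>R p + \<phi> p *\<^sub>R h) = S h + (\<eta> p * L h + E h * \<phi> p)"
proof -
  have "E (L h *\<^sub>R p + \<phi> p *\<^sub>R h) = L h * E p + \<phi> p * E h"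
    using \<open>linear E\<close> by (simp add: linear_add linear_scale)
  then show ?thesis
    using assms(2) by (simp add: algebra_simps)
qed

lemma keyfitz_kranzer_entropy_pair:
  fixes \<phi> \<eta> \<psi> :: "real \<times> real \<Rightarrow> real"
  assumes diff: "\<forall>p\<in>D. \<phi> differentiable (at p) \<and> \<eta> differentiable (at p) \<and> \<psi> differentiable (at p)"
    and psi_grad: "\<forall>p\<in>D. \<forall>h. frechet_derivative \<psi> (at p) h =
                     (frechet_derivative \<eta> (at p) p - \<eta> p) * frechet_derivative \<phi> (at p) h"
  shows "entropy_pair D (\<lambda>x. \<phi> x *\<^sub>R x) \<eta> (\<lambda>x. \<psi> x + \<eta> x * \<phi> x)"
  unfolding entropy_pair_def
proof
  fix p assume "p \<in> D"
  define E L S where "E = frechet_derivative \<eta> (at p)"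
    and "L = frechet_derivative \<phi> (at p)" and "S = frechet_derivative \<psi> (at p)"
  have dE: "(\<eta> has_derivative E) (at p)" and dL: "(\<phi> has_derivative L) (at p)"
    and dS: "(\<psi> has_derivative S) (at p)"
    using diff \<open>p \<in> D\<close> by (simp_all add: E_def L_def S_def frechet_derivative_works)
  have dF: "((\<lambda>x. \<phi> x *\<^sub>R x) has_derivative (\<lambda>h. L h *\<^sub>R p + \<phi> p *\<^sub>R h)) (at p)"
    using dL by (rule has_derivative_scaleR_self)
  have dq: "((\<lambda>x. \<psi> x + \<eta> x * \<phi> x) has_derivative (\<lambda>h. S h + (\<eta> p * L h + E h * \<phi> p))) (at p)"
    using dE dL dS by (auto intro!: derivative_eq_intros)
  have "E (L h *\<^sub>R p + \<phi> p *\<^sub>R h) = S h + (\<eta> p * L h + E h * \<phi> p)" for h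
    using has_derivative_linear[OF dE] psi_grad \<open>p \<in> D\<close>
    by (intro keyfitz_kranzer_entropy_identity) (auto simp: E_def L_def S_def)
  then show "(\<lambda>x. \<phi> x *\<^sub>R x) differentiable (at p) \<and> \<eta> differentiable (at p) \<and>
      (\<lambda>x. \<psi> x + \<eta> x * \<phi> x) differentiable (at p) \<and>
      (\<forall>h. frechet_derivative \<eta> (at p) (frechet_derivative (\<lambda>x. \<phi> x *\<^sub>R x) (at p) h) =
           frechet_derivative (\<lambda>x. \<psi> x + \<eta> x * \<phi> x) (at p) h)"
    using dF dE dq
    by (simp add: differentiable_def frechet_derivative_at[OF dF, symmetric]
        frechet_derivative_at[OF dq, symmetric] E_def[symmetric]) blast
qed

theorem lemma2:
  fixes D :: "(real \<times> real) set"
    and \<phi> \<eta> \<psi> q :: "real \<times> real \<Rightarrow> real"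
    and F :: "real \<times> real \<Rightarrow> real \<times> real"
  assumes D_open: "open D"
    and phi_C1: "C1_on D \<phi>"
    and eta_C1: "C1_on D \<eta>"
    and eta_lip: "\<exists>U L. open U \<and> (0, 0) \<in> U \<and> L-lipschitz_on (U \<inter> D) \<eta>"
    and psi_C1: "C1_on D \<psi>"
    and psi_grad: "\<forall>p\<in>D. \<forall>h. frechet_derivative \<psi> (at p) h =
                     (frechet_derivative \<eta> (at p) p - \<eta> p) * frechet_derivative \<phi> (at p) h"
    and F_def: "F = (\<lambda>(u, v). (u * \<phi> (u, v), v * \<phi> (u, v)))"
    and q_def: "q = (\<lambda>p. \<psi> p + \<eta> p * \<phi> p)"
  shows "entropy_pair D F \<eta> q \<and> (convex_on D \<eta> \<longrightarrow> convex_entropy_pair D F \<eta> q)"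
proof -
  have F_scaleR: "F = (\<lambda>x. \<phi> x *\<^sub>R x)"
    unfolding F_def by (auto simp: mult.commute)
  have "entropy_pair D F \<eta> q"
    unfolding F_scaleR q_def
    using phi_C1 eta_C1 psi_C1 psi_grad unfolding C1_on_def
    by (intro keyfitz_kranzer_entropy_pair) auto
  then show ?thesis
    unfolding convex_entropy_pair_def by blast
qed

end
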